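(* Let $n\ge 1$ and $0\le k\le n$, and let $L_n$ denote the number of Latin squares of order $n$. The number of preference profiles for $n$ men and $n$ women in which both the men's preferences and the women's preferences form Latin squares and there are exactly $k$ pairs of soulmates is \[\frac{L_n^2}{n!} \binom{n}{k} \sum_{i=0}^{n-k} (-1)^i \frac{(n-k)!}{i!}.\]
   Context: A preference profile for $n$ (labeled) men and $n$ (labeled) women consists of, for each man, a strict ranking of the women (bijection to $\{1,\dots,n\}$, 1 = favorite), and for each woman, a strict ranking of the men. The men's preferences form a Latin square if the $n\times n$ matrix whose $i$-th row lists the women in man $i$'s order of preference is a Latin square, i.e. for each rank $r$ the women ranked $r$-th by the different men are distinct; similarly for the women's preferences. A man and a woman are soulmates if each ranks the other first. *)

theory Defs
  imports "HOL-Library.FuncSet" Complex_Main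
begin

text \<open>Men and women are both labelled by {0..<n}.\<close>

definition latin_square :: "nat \<Rightarrow> (nat \<Rightarrow> nat \<Rightarrow> nat) \<Rightarrow> bool" where
  "latin_square n A \<longleftrightarrow>
     A \<in> {0..<n} \<rightarrow>\<^sub>E ({0..<n} \<rightarrow>\<^sub>E {0..<n}) \<and>
     (\<forall>i\<in>{0..<n}. bij_betw (\<lambda>j. A i j) {0..<n} {0..<n}) \<and>
     (\<forall>j\<in>{0..<n}. bij_betw (\<lambda>i. A i j) {0..<n} {0..<n})"

definition num_latin_squares :: "nat \<Rightarrow> nat" where
  "num_latin_squares n = card {A. latin_square n A}"

text \<open>A ranking side: P i x is the rank (in {1..n}, 1 = favourite) that person i gives to
  person x of the opposite sex; each P i is a bijection onto {1..n}.\<close>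

definition rankings :: "nat \<Rightarrow> (nat \<Rightarrow> nat \<Rightarrow> nat) set" where
  "rankings n = {P. P \<in> {0..<n} \<rightarrow>\<^sub>E ({0..<n} \<rightarrow>\<^sub>E {1..n}) \<and>
                    (\<forall>i\<in>{0..<n}. bij_betw (P i) {0..<n} {1..n})}"

definition prefs_latin :: "nat \<Rightarrow> (nat \<Rightarrow> nat \<Rightarrow> nat) \<Rightarrow> bool" where
  "prefs_latin n P \<longleftrightarrow>
     (\<forall>i\<in>{0..<n}. \<forall>j\<in>{0..<n}. \<forall>x\<in>{0..<n}. \<forall>y\<in>{0..<n}.
        i \<noteq> j \<longrightarrow> P i x = P j y \<longrightarrow> x \<noteq> y)"

definition soulmates :: "nat \<Rightarrow> (nat \<Rightarrow> nat \<Rightarrow> nat) \<Rightarrow> (nat \<Rightarrow> nat \<Rightarrow> nat) \<Rightarrow> (nat \<times> nat) set" where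
  "soulmates n PM PW = {(m, w). m \<in> {0..<n} \<and> w \<in> {0..<n} \<and> PM m w = 1 \<and> PW w m = 1}"

end

theory Submission
  imports Defs "HOL-Combinatorics.Permutations" "HOL-Computational_Algebra.Formal_Power_Series"
begin

(* One side of a Latin profile is the same thing as a Latin square: subtracting one from the
   matrix of ranks gives a Latin square, its rows because each ranking is a bijection and its
   columns because of the Latin condition.  The Latin condition also makes the map sending a
   person to their favourite a permutation; relabelling the people by a permutation sigma
   composes it with sigma, so all fibres of this map have the same size L_n / n!.  Soulmates are
   the fixed points of favW o favM, hence the count is (L_n / n!)^2 times the number of pairs
   (sigma, tau) of permutations such that tau o sigma has k fixed points, i.e.
   n! * (n choose k) * D_(n-k).  The derangement numbers D_m are found by inverting
   m! = sum_j (m choose j) D_j. *)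

lemma bij_betw_iff_inj_on_card:
  assumes "finite B" and "f ` A \<subseteq> B" and "card A = card B"
  shows "bij_betw f A B \<longleftrightarrow> inj_on f A"
proof
  assume "inj_on f A"
  then have "card (f ` A) = card B"
    using assms(3) by (simp add: card_image)
  then have "f ` A = B"
    using card_seteq[OF assms(1,2)] by simp
  with \<open>inj_on f A\<close> show "bij_betw f A B"
    by (simp add: bij_betw_def)
qed (simp add: bij_betw_def)

lemma card_fibres_uniform:
  assumes "finite S" and "finite T" and "f ` S \<subseteq> T"
    and "\<And>t. t \<in> T \<Longrightarrow> card {x \<in> S. f x = t} = c"
  shows "card {x \<in> S. P (f x)} = c * card {t \<in> T. P t}"
proof -
  have "{x \<in> S. P (f x)} = (\<Union>t \<in> {t \<in> T. P t}. {x \<in> S. f x = t})"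
    using assms(3) by auto
  also have "card \<dots> = (\<Sum>t \<in> {t \<in> T. P t}. card {x \<in> S. f x = t})"
    by (rule card_UN_disjoint) (use assms(1,2) in auto)
  also have "\<dots> = c * card {t \<in> T. P t}"
    using assms(4) by simp
  finally show ?thesis .
qed

definition derangements :: "'a set \<Rightarrow> ('a \<Rightarrow> 'a) set" where
  "derangements A = {p. p permutes A \<and> (\<forall>x \<in> A. p x \<noteq> x)}"

definition subfactorial :: "nat \<Rightarrow> real" where
  "subfactorial m = (\<Sum>i = 0..m. (-1) ^ i * fact m / fact i)"

lemma derangements_support: "p \<in> derangements A \<Longrightarrow> {x. p x \<noteq> x} = A"
  unfolding derangements_def using permutes_not_in by fastforce

lemma permutes_in_derangements_support: "p permutes A \<Longrightarrow> p \<in> derangements {x. p x \<noteq> x}"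
  by (simp add: derangements_def permutes_def)

lemma finite_derangements: "finite A \<Longrightarrow> finite (derangements A)"
  by (rule finite_subset[OF _ finite_permutations]) (auto simp: derangements_def)

lemma card_permutes_by_support:
  assumes "finite A"
  shows "card {p. p permutes A \<and> Q {x. p x \<noteq> x}}
           = (\<Sum>F | F \<subseteq> A \<and> Q F. card (derangements F))"
proof -
  have "{p. p permutes A \<and> Q {x. p x \<noteq> x}} = (\<Union>F \<in> {F. F \<subseteq> A \<and> Q F}. derangements F)"
  proof (intro equalityI subsetI)
    fix p assume "p \<in> {p. p permutes A \<and> Q {x. p x \<noteq> x}}"
    then have "p permutes A" and "Q {x. p x \<noteq> x}" by simp_all
    moreover have "{x. p x \<noteq> x} \<subseteq> A"
      using permutes_not_in[OF \<open>p permutes A\<close>] by blast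
    ultimately show "p \<in> (\<Union>F \<in> {F. F \<subseteq> A \<and> Q F}. derangements F)"
      using permutes_in_derangements_support by blast
  next
    fix p assume "p \<in> (\<Union>F \<in> {F. F \<subseteq> A \<and> Q F}. derangements F)"
    then obtain F where "F \<subseteq> A" "Q F" "p \<in> derangements F" by blast
    then show "p \<in> {p. p permutes A \<and> Q {x. p x \<noteq> x}}"
      using derangements_support[of p F] permutes_subset[of p F A]
      by (simp add: derangements_def)
  qed
  also have "card \<dots> = (\<Sum>F | F \<subseteq> A \<and> Q F. card (derangements F))"
  proof (rule card_UN_disjoint)
    show "finite {F. F \<subseteq> A \<and> Q F}"
      using assms by simp
    show "\<forall>F \<in> {F. F \<subseteq> A \<and> Q F}. finite (derangements F)"
      using assms finite_derangements finite_subset by blast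
    show "\<forall>F \<in> {F. F \<subseteq> A \<and> Q F}. \<forall>G \<in> {F. F \<subseteq> A \<and> Q F}.
            F \<noteq> G \<longrightarrow> derangements F \<inter> derangements G = {}"
      using derangements_support by blast
  qed
  finally show ?thesis .
qed

lemma sum_Pow_card:
  fixes g :: "nat \<Rightarrow> 'b::comm_semiring_1"
  assumes "finite A"
  shows "(\<Sum>F \<in> Pow A. g (card F)) = (\<Sum>j \<le> card A. of_nat (card A choose j) * g j)"
proof -
  have "(\<Sum>F \<in> Pow A. g (card F)) = (\<Sum>j \<le> card A. \<Sum>F | F \<in> Pow A \<and> card F = j. g (card F))"
    by (rule sum.group[symmetric]) (use assms card_mono in auto)
  also have "\<dots> = (\<Sum>j \<le> card A. of_nat (card A choose j) * g j)"
    using n_subsets[OF assms] by simp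
  finally show ?thesis .
qed

(* subfactorial j / j! is the j-th coefficient of e^(-x) / (1 - x), and multiplying by e^x
   leaves 1 / (1 - x), all of whose coefficients are 1. *)
lemma sum_binomial_subfactorial: "(\<Sum>j \<le> m. real (m choose j) * subfactorial j) = fact m"
proof -
  define U :: "real fps" where "U = Abs_fps (\<lambda>_. 1)"
  have partial_sums: "fps_nth (fps_exp (-1) * U) j = subfactorial j / fact j" for j
    by (simp add: U_def fps_mult_nth subfactorial_def sum_divide_distrib)
  have "fps_exp (-1) * U * fps_exp 1 = U * fps_exp (-1 + 1)"
    by (simp only: fps_exp_add_mult mult_ac)
  also have "\<dots> = U"
    by simp
  finally have U_eq: "fps_exp (-1) * U * fps_exp 1 = U" .
  have "fps_nth (fps_exp (-1) * U * fps_exp 1) m = 1"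
    unfolding U_eq by (simp add: U_def)
  then have "(\<Sum>j = 0..m. subfactorial j / fact j / fact (m - j)) = 1"
    by (simp add: fps_mult_nth[of "fps_exp (-1) * U"] partial_sums)
  then have "fact m * (\<Sum>j \<le> m. subfactorial j / fact j / fact (m - j)) = fact m"
    by (simp add: atLeast0AtMost)
  then have "(\<Sum>j \<le> m. fact m * (subfactorial j / fact j / fact (m - j))) = fact m"
    by (simp only: sum_distrib_left)
  moreover have "real (m choose j) * subfactorial j = fact m * (subfactorial j / fact j / fact (m - j))"
    if "j \<le> m" for j
    using that by (simp add: binomial_fact)
  ultimately show ?thesis
    by simp
qed

lemma card_derangements:
  assumes "finite A"
  shows "real (card (derangements A)) = subfactorial (card A)"
  using assms
proof (induction "card A" arbitrary: A rule: less_induct)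
  case less
  have proper: "real (card (derangements F)) = subfactorial (card F)" if "F \<in> Pow A - {A}" for F
  proof -
    have "F \<subset> A"
      using that by blast
    then have "card F < card A" and "finite F"
      using less.prems psubset_card_mono finite_subset by auto
    then show ?thesis
      by (rule less.hyps)
  qed
  have "fact (card A) = real (card {p. p permutes A})"
    using card_permutations[OF refl less.prems] by simp
  also have "\<dots> = (\<Sum>F \<in> Pow A. real (card (derangements F)))"
    using card_permutes_by_support[OF less.prems, of "\<lambda>_. True"] by (simp add: Pow_def)
  also have "\<dots> = real (card (derangements A)) + (\<Sum>F \<in> Pow A - {A}. subfactorial (card F))"
    using less.prems proper by (simp add: sum.remove[of _ A])
  also have "(\<Sum>F \<in> Pow A - {A}. subfactorial (card F)) = fact (card A) - subfactorial (card A)"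
    using less.prems sum_Pow_card[OF less.prems, of subfactorial]
    by (simp add: sum.remove[of _ A] sum_binomial_subfactorial)
  finally show ?case
    by simp
qed

lemma card_permutes_with_fixpoints:
  assumes "finite A" and "k \<le> card A"
  shows "real (card {p. p permutes A \<and> card {x \<in> A. p x = x} = k})
           = real (card A choose k) * subfactorial (card A - k)"
proof -
  have fixpoints: "card {x \<in> A. p x = x} = card A - card {x. p x \<noteq> x}"
    and support: "card {x. p x \<noteq> x} \<le> card A" if "p permutes A" for p
  proof -
    have "{x. p x \<noteq> x} \<subseteq> A" and "{x \<in> A. p x = x} = A - {x. p x \<noteq> x}"
      using permutes_not_in[OF that] by blast+
    then show "card {x \<in> A. p x = x} = card A - card {x. p x \<noteq> x}"
      and "card {x. p x \<noteq> x} \<le> card A"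
      using assms(1) by (simp_all add: card_Diff_subset finite_subset card_mono)
  qed
  have "card {x \<in> A. p x = x} = k \<longleftrightarrow> card {x. p x \<noteq> x} = card A - k" if "p permutes A" for p
    using fixpoints[OF that] support[OF that] assms(2) by linarith
  then have "{p. p permutes A \<and> card {x \<in> A. p x = x} = k}
               = {p. p permutes A \<and> card {x. p x \<noteq> x} = card A - k}"
    by blast
  then have "real (card {p. p permutes A \<and> card {x \<in> A. p x = x} = k})
               = (\<Sum>F | F \<subseteq> A \<and> card F = card A - k. real (card (derangements F)))"
    using card_permutes_by_support[OF assms(1), of "\<lambda>F. card F = card A - k"] by simp
  also have "\<dots> = (\<Sum>F | F \<subseteq> A \<and> card F = card A - k. subfactorial (card A - k))"
    using assms(1) by (intro sum.cong) (auto simp: card_derangements finite_subset)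
  also have "\<dots> = real (card A choose k) * subfactorial (card A - k)"
    using n_subsets[OF assms(1), of "card A - k"] binomial_symmetric[OF assms(2)] by simp
  finally show ?thesis .
qed

lemma card_permutes_pairs_compose:
  assumes "finite A"
  shows "card {(\<sigma>, \<tau>). \<sigma> permutes A \<and> \<tau> permutes A \<and> P (\<tau> \<circ> \<sigma>)}
           = fact (card A) * card {\<rho>. \<rho> permutes A \<and> P \<rho>}"
proof -
  have "bij_betw (\<lambda>(\<sigma>, \<tau>). (\<sigma>, \<tau> \<circ> \<sigma>)) {(\<sigma>, \<tau>). \<sigma> permutes A \<and> \<tau> permutes A \<and> P (\<tau> \<circ> \<sigma>)}
          ({\<sigma>. \<sigma> permutes A} \<times> {\<rho>. \<rho> permutes A \<and> P \<rho>})"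
    by (rule bij_betw_byWitness[where f' = "\<lambda>(\<sigma>, \<rho>). (\<sigma>, \<rho> \<circ> inv \<sigma>)"])
      (auto simp: comp_assoc permutes_inv_o permutes_compose permutes_inv)
  then show ?thesis
    using card_permutations[OF refl assms] by (simp add: bij_betw_same_card card_cartesian_product)
qed

lemma latin_square_iff_inj:
  "latin_square n A \<longleftrightarrow> A \<in> {0..<n} \<rightarrow>\<^sub>E ({0..<n} \<rightarrow>\<^sub>E {0..<n}) \<and>
     (\<forall>i \<in> {0..<n}. inj_on (A i) {0..<n}) \<and> (\<forall>j \<in> {0..<n}. inj_on (\<lambda>i. A i j) {0..<n})"
proof (cases "A \<in> {0..<n} \<rightarrow>\<^sub>E ({0..<n} \<rightarrow>\<^sub>E {0..<n})")
  case True
  then have entries: "A i j < n" if "i < n" "j < n" for i j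
    using that by (auto simp: PiE_iff)
  have "bij_betw (A i) {0..<n} {0..<n} \<longleftrightarrow> inj_on (A i) {0..<n}" if "i < n" for i
    using that entries by (simp add: bij_betw_iff_inj_on_card image_subset_iff)
  moreover have "bij_betw (\<lambda>i. A i j) {0..<n} {0..<n} \<longleftrightarrow> inj_on (\<lambda>i. A i j) {0..<n}"
    if "j < n" for j
    using that entries by (simp add: bij_betw_iff_inj_on_card image_subset_iff)
  ultimately show ?thesis
    using True by (simp add: latin_square_def)
qed (simp add: latin_square_def)

lemma rankings_iff_inj:
  "P \<in> rankings n \<longleftrightarrow>
     P \<in> {0..<n} \<rightarrow>\<^sub>E ({0..<n} \<rightarrow>\<^sub>E {1..n}) \<and> (\<forall>i \<in> {0..<n}. inj_on (P i) {0..<n})"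
proof (cases "P \<in> {0..<n} \<rightarrow>\<^sub>E ({0..<n} \<rightarrow>\<^sub>E {1..n})")
  case True
  then have "P i x \<in> {1..n}" if "i < n" "x < n" for i x
    using that by (auto simp: PiE_iff)
  then have "bij_betw (P i) {0..<n} {1..n} \<longleftrightarrow> inj_on (P i) {0..<n}" if "i < n" for i
    using that by (simp add: bij_betw_iff_inj_on_card image_subset_iff)
  then show ?thesis
    using True by (simp add: rankings_def)
qed (simp add: rankings_def)

lemma prefs_latin_iff_inj_columns:
  "prefs_latin n P \<longleftrightarrow> (\<forall>x \<in> {0..<n}. inj_on (\<lambda>i. P i x) {0..<n})"
  unfolding prefs_latin_def inj_on_def by blast

definition latin_rankings :: "nat \<Rightarrow> (nat \<Rightarrow> nat \<Rightarrow> nat) set" where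
  "latin_rankings n = {P \<in> rankings n. prefs_latin n P}"

lemma rank_matrix_in_latin_rankings_iff:
  assumes "A \<in> {0..<n} \<rightarrow>\<^sub>E ({0..<n} \<rightarrow>\<^sub>E {0..<n})"
  shows "(\<lambda>i \<in> {0..<n}. \<lambda>x \<in> {0..<n}. Suc (A i x)) \<in> latin_rankings n \<longleftrightarrow> latin_square n A"
proof -
  have "(\<lambda>i \<in> {0..<n}. \<lambda>x \<in> {0..<n}. Suc (A i x)) \<in> {0..<n} \<rightarrow>\<^sub>E ({0..<n} \<rightarrow>\<^sub>E {1..n})"
    using assms by (auto simp: PiE_iff Suc_le_eq)
  moreover have "inj_on (\<lambda>x \<in> {0..<n}. Suc (A i x)) {0..<n} \<longleftrightarrow> inj_on (A i) {0..<n}" for i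
    by (simp add: inj_on_def)
  moreover have "inj_on (\<lambda>i. (\<lambda>i \<in> {0..<n}. \<lambda>x \<in> {0..<n}. Suc (A i x)) i x) {0..<n}
                   \<longleftrightarrow> inj_on (\<lambda>i. A i x) {0..<n}" if "x \<in> {0..<n}" for x
    using that by (simp add: inj_on_def)
  ultimately show ?thesis
    using assms
    by (simp add: latin_rankings_def rankings_iff_inj prefs_latin_iff_inj_columns latin_square_iff_inj)
qed

lemma latin_rankings_eq_image:
  "latin_rankings n = (\<lambda>A. \<lambda>i \<in> {0..<n}. \<lambda>x \<in> {0..<n}. Suc (A i x)) ` {A. latin_square n A}"
  (is "_ = ?ranks ` _")
proof (intro equalityI subsetI)
  fix P assume P: "P \<in> latin_rankings n"
  then have P_PiE: "P \<in> {0..<n} \<rightarrow>\<^sub>E ({0..<n} \<rightarrow>\<^sub>E {1..n})"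
    by (simp add: latin_rankings_def rankings_def)
  have pred_rank: "P i x - 1 < n" "Suc (P i x - 1) = P i x" if "i < n" "x < n" for i x
    using PiE_mem[OF PiE_mem[OF P_PiE]] that by fastforce+
  define A where "A = (\<lambda>i \<in> {0..<n}. \<lambda>x \<in> {0..<n}. P i x - 1)"
  have A: "A \<in> {0..<n} \<rightarrow>\<^sub>E ({0..<n} \<rightarrow>\<^sub>E {0..<n})"
    using pred_rank(1) by (auto simp: A_def)
  have "?ranks A = (\<lambda>i \<in> {0..<n}. \<lambda>x \<in> {0..<n}. P i x)"
    unfolding A_def by (intro restrict_ext) (use pred_rank(2) in auto)
  also have "\<dots> = (\<lambda>i \<in> {0..<n}. P i)"
    using PiE_restrict[OF PiE_mem[OF P_PiE]] by (intro restrict_ext) simp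
  also have "\<dots> = P"
    using P_PiE by simp
  finally show "P \<in> ?ranks ` {A. latin_square n A}"
    using P rank_matrix_in_latin_rankings_iff[OF A] by auto
next
  fix P assume "P \<in> ?ranks ` {A. latin_square n A}"
  then show "P \<in> latin_rankings n"
    using rank_matrix_in_latin_rankings_iff latin_square_def by auto
qed

lemma card_latin_rankings: "card (latin_rankings n) = num_latin_squares n"
proof -
  have "inj_on (\<lambda>A. \<lambda>i \<in> {0..<n}. \<lambda>x \<in> {0..<n}. Suc (A i x)) {A. latin_square n A}"
  proof (rule inj_onI)
    fix A B
    assume "A \<in> {A. latin_square n A}" and "B \<in> {A. latin_square n A}"
    then have A: "A \<in> {0..<n} \<rightarrow>\<^sub>E ({0..<n} \<rightarrow>\<^sub>E {0..<n})"
      and B: "B \<in> {0..<n} \<rightarrow>\<^sub>E ({0..<n} \<rightarrow>\<^sub>E {0..<n})"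
      by (simp_all add: latin_square_def)
    assume eq: "(\<lambda>i \<in> {0..<n}. \<lambda>x \<in> {0..<n}. Suc (A i x)) = (\<lambda>i \<in> {0..<n}. \<lambda>x \<in> {0..<n}. Suc (B i x))"
    have "A i x = B i x" if "i \<in> {0..<n}" "x \<in> {0..<n}" for i x
      using fun_cong[OF fun_cong[OF eq, of i], of x] that by simp
    then have "A i = B i" if "i \<in> {0..<n}" for i
      using PiE_ext[OF PiE_mem[OF A that] PiE_mem[OF B that]] that by blast
    then show "A = B"
      using PiE_ext[OF A B] by blast
  qed
  then show ?thesis
    unfolding num_latin_squares_def latin_rankings_eq_image by (rule card_image)
qed

(* Extended by the identity outside {0..<n}, so that it can be a permutation in the sense of
   permutes. *)
definition favourite :: "nat \<Rightarrow> (nat \<Rightarrow> nat \<Rightarrow> nat) \<Rightarrow> nat \<Rightarrow> nat" where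
  "favourite n P i = (if i < n then (THE x. x < n \<and> P i x = 1) else i)"

lemma favourite_eqI:
  assumes "P \<in> rankings n" and "i < n" and "x < n" and "P i x = 1"
  shows "favourite n P i = x"
proof -
  have "inj_on (P i) {0..<n}"
    using assms(1,2) by (simp add: rankings_iff_inj)
  then have "(THE x. x < n \<and> P i x = 1) = x"
    using assms(3,4) by (intro the_equality) (auto simp: inj_on_def)
  then show ?thesis
    using assms(2) by (simp add: favourite_def)
qed

lemma favourite_rank:
  assumes "P \<in> rankings n" and "i < n"
  shows "favourite n P i < n" and "P i (favourite n P i) = 1"
proof -
  have "P i ` {0..<n} = {1..n}"
    using assms by (simp add: rankings_def bij_betw_def)
  then have "1 \<in> P i ` {0..<n}"
    using assms(2) by simp
  then obtain x where "x < n" and "P i x = 1"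
    by auto
  with favourite_eqI[OF assms] show "favourite n P i < n" and "P i (favourite n P i) = 1"
    by simp_all
qed

lemma favourite_permutes:
  assumes "P \<in> latin_rankings n"
  shows "favourite n P permutes {0..<n}"
proof (rule bij_imp_permutes)
  have P: "P \<in> rankings n" and columns: "\<forall>x \<in> {0..<n}. inj_on (\<lambda>i. P i x) {0..<n}"
    using assms by (simp_all add: latin_rankings_def prefs_latin_iff_inj_columns)
  have "inj_on (favourite n P) {0..<n}"
  proof (rule inj_onI)
    fix i j assume i: "i \<in> {0..<n}" and j: "j \<in> {0..<n}"
      and same: "favourite n P i = favourite n P j"
    have "favourite n P i \<in> {0..<n}"
      using favourite_rank(1)[OF P] i by simp
    moreover have "P i (favourite n P i) = P j (favourite n P i)"
      using favourite_rank(2)[OF P] i j same by (metis atLeastLessThan_iff)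
    ultimately show "i = j"
      using columns i j by (meson inj_onD)
  qed
  moreover have "favourite n P ` {0..<n} \<subseteq> {0..<n}"
    using favourite_rank(1)[OF P] by auto
  ultimately show "bij_betw (favourite n P) {0..<n} {0..<n}"
    by (simp add: bij_betw_iff_inj_on_card)
qed (simp add: favourite_def)

lemma card_soulmates:
  assumes "PM \<in> rankings n" and "PW \<in> rankings n"
  shows "card (soulmates n PM PW) = card {m \<in> {0..<n}. (favourite n PW \<circ> favourite n PM) m = m}"
proof -
  have "soulmates n PM PW
          = (\<lambda>m. (m, favourite n PM m)) ` {m \<in> {0..<n}. (favourite n PW \<circ> favourite n PM) m = m}"
  proof (intro equalityI subsetI)
    fix p assume "p \<in> soulmates n PM PW"
    then obtain m w where "p = (m, w)" "m < n" "w < n" "PM m w = 1" "PW w m = 1"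
      by (auto simp: soulmates_def)
    then show "p \<in> (\<lambda>m. (m, favourite n PM m)) ` {m \<in> {0..<n}. (favourite n PW \<circ> favourite n PM) m = m}"
      using favourite_eqI[OF assms(1)] favourite_eqI[OF assms(2)] by auto
  next
    fix p assume "p \<in> (\<lambda>m. (m, favourite n PM m)) ` {m \<in> {0..<n}. (favourite n PW \<circ> favourite n PM) m = m}"
    then obtain m where p: "p = (m, favourite n PM m)" and "m < n"
      and fixed: "favourite n PW (favourite n PM m) = m"
      by auto
    then have "favourite n PM m < n" and "PM m (favourite n PM m) = 1"
      using favourite_rank[OF assms(1)] by simp_all
    moreover have "PW (favourite n PM m) m = 1"
      using favourite_rank(2)[OF assms(2) \<open>favourite n PM m < n\<close>] fixed by simp
    ultimately show "p \<in> soulmates n PM PW"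
      using p \<open>m < n\<close> by (simp add: soulmates_def)
  qed
  moreover have "inj_on (\<lambda>m. (m, favourite n PM m)) A" for A
    by (simp add: inj_on_def)
  ultimately show ?thesis
    by (simp add: card_image)
qed

definition relabel :: "nat \<Rightarrow> (nat \<Rightarrow> nat) \<Rightarrow> (nat \<Rightarrow> nat \<Rightarrow> nat) \<Rightarrow> nat \<Rightarrow> nat \<Rightarrow> nat" where
  "relabel n \<sigma> P = (\<lambda>i \<in> {0..<n}. P (\<sigma> i))"

lemma relabel_in_latin_rankings:
  assumes "\<sigma> permutes {0..<n}" and "P \<in> latin_rankings n"
  shows "relabel n \<sigma> P \<in> latin_rankings n"
proof -
  have \<sigma>: "\<sigma> i \<in> {0..<n}" if "i \<in> {0..<n}" for i
    using permutes_in_image[OF assms(1)] that by simp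
  have P: "P \<in> {0..<n} \<rightarrow>\<^sub>E ({0..<n} \<rightarrow>\<^sub>E {1..n})" "\<forall>i \<in> {0..<n}. inj_on (P i) {0..<n}"
    "\<forall>x \<in> {0..<n}. inj_on (\<lambda>i. P i x) {0..<n}"
    using assms(2) by (simp_all add: latin_rankings_def rankings_iff_inj prefs_latin_iff_inj_columns)
  have "relabel n \<sigma> P \<in> {0..<n} \<rightarrow>\<^sub>E ({0..<n} \<rightarrow>\<^sub>E {1..n})"
    using P(1) \<sigma> by (auto simp: relabel_def PiE_iff)
  moreover have "\<forall>i \<in> {0..<n}. inj_on (relabel n \<sigma> P i) {0..<n}"
    using P(2) \<sigma> by (simp add: relabel_def)
  moreover have "inj_on (\<lambda>i. relabel n \<sigma> P i x) {0..<n}" if "x \<in> {0..<n}" for x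
  proof -
    have "inj_on ((\<lambda>i. P i x) \<circ> \<sigma>) {0..<n}"
      using P(3) that permutes_inj_on[OF assms(1)] permutes_image[OF assms(1)]
      by (intro comp_inj_on) simp_all
    then show ?thesis
      by (rule inj_on_cong[THEN iffD1, rotated]) (simp add: relabel_def)
  qed
  ultimately show ?thesis
    by (simp add: latin_rankings_def rankings_iff_inj prefs_latin_iff_inj_columns)
qed

lemma favourite_relabel:
  assumes "\<sigma> permutes {0..<n}"
  shows "favourite n (relabel n \<sigma> P) = favourite n P \<circ> \<sigma>"
proof
  fix i
  show "favourite n (relabel n \<sigma> P) i = (favourite n P \<circ> \<sigma>) i"
  proof (cases "i < n")
    case True
    then have "\<sigma> i < n"
      using permutes_in_image[OF assms] by simp
    with True show ?thesis
      by (simp add: favourite_def relabel_def)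
  next
    case False
    then have "\<sigma> i = i"
      using permutes_not_in[OF assms] by simp
    with False show ?thesis
      by (simp add: favourite_def)
  qed
qed

lemma relabel_relabel:
  assumes "\<sigma> permutes {0..<n}"
  shows "relabel n \<sigma> (relabel n \<rho> P) = relabel n (\<rho> \<circ> \<sigma>) P"
  using permutes_in_image[OF assms] by (auto simp: relabel_def fun_eq_iff)

lemma relabel_id: "P \<in> rankings n \<Longrightarrow> relabel n id P = P"
  by (auto simp: relabel_def rankings_def fun_eq_iff PiE_def extensional_def)

lemma card_favourite_fibre:
  assumes "\<sigma> permutes {0..<n}"
  shows "card {P \<in> latin_rankings n. favourite n P = \<sigma>} = card {P \<in> latin_rankings n. favourite n P = id}"
proof -
  have \<sigma>': "inv \<sigma> permutes {0..<n}"
    using permutes_inv[OF assms] .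
  have undo: "relabel n \<rho>' (relabel n \<rho> P) = P"
    if "\<rho>' permutes {0..<n}" "\<rho> \<circ> \<rho>' = id" "P \<in> latin_rankings n" for \<rho> \<rho>' P
    using that by (simp add: relabel_relabel relabel_id latin_rankings_def)
  have "bij_betw (relabel n \<sigma>) {P \<in> latin_rankings n. favourite n P = id}
          {P \<in> latin_rankings n. favourite n P = \<sigma>}"
    by (rule bij_betw_byWitness[where f' = "relabel n (inv \<sigma>)"])
      (use assms \<sigma>' in \<open>auto simp: undo relabel_in_latin_rankings favourite_relabel permutes_inv_o\<close>)
  then show ?thesis
    by (simp add: bij_betw_same_card)
qed

lemma finite_latin_rankings: "finite (latin_rankings n)"
  by (rule finite_subset[of _ "{0..<n} \<rightarrow>\<^sub>E ({0..<n} \<rightarrow>\<^sub>E {1..n})"])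
    (auto simp: latin_rankings_def rankings_def intro!: finite_PiE)

lemma num_latin_squares_eq_fact_mult:
  "num_latin_squares n = fact n * card {P \<in> latin_rankings n. favourite n P = id}"
proof -
  have "card {P \<in> latin_rankings n. True}
          = card {P \<in> latin_rankings n. favourite n P = id} * card {\<sigma> \<in> {\<sigma>. \<sigma> permutes {0..<n}}. True}"
  proof (rule card_fibres_uniform)
    show "favourite n ` latin_rankings n \<subseteq> {\<sigma>. \<sigma> permutes {0..<n}}"
      using favourite_permutes by blast
    show "card {P \<in> latin_rankings n. favourite n P = \<sigma>} = card {P \<in> latin_rankings n. favourite n P = id}"
      if "\<sigma> \<in> {\<sigma>. \<sigma> permutes {0..<n}}" for \<sigma>
      using card_favourite_fibre that by blast
  qed (simp_all add: finite_latin_rankings finite_permutations)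
  then show ?thesis
    by (simp add: card_latin_rankings card_permutations)
qed

lemma card_latin_profiles_by_favourites:
  "card {(PM, PW). PM \<in> latin_rankings n \<and> PW \<in> latin_rankings n \<and>
                   Q (favourite n PM) (favourite n PW)}
     = card {P \<in> latin_rankings n. favourite n P = id} ^ 2 *
       card {(\<sigma>, \<tau>). \<sigma> permutes {0..<n} \<and> \<tau> permutes {0..<n} \<and> Q \<sigma> \<tau>}"
proof -
  let ?fibre = "\<lambda>\<sigma>. {P \<in> latin_rankings n. favourite n P = \<sigma>}"
  let ?perms = "{\<sigma>. \<sigma> permutes {0..<n}}"
  let ?favourites = "map_prod (favourite n) (favourite n)"
  have "card {z \<in> latin_rankings n \<times> latin_rankings n. case_prod Q (?favourites z)}
          = card (?fibre id) ^ 2 * card {p \<in> ?perms \<times> ?perms. case_prod Q p}"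
  proof (rule card_fibres_uniform)
    show "?favourites ` (latin_rankings n \<times> latin_rankings n) \<subseteq> ?perms \<times> ?perms"
      using favourite_permutes by auto
    show "card {z \<in> latin_rankings n \<times> latin_rankings n. ?favourites z = p} = card (?fibre id) ^ 2"
      if pair: "p \<in> ?perms \<times> ?perms" for p
    proof -
      obtain \<sigma> \<tau> where p: "p = (\<sigma>, \<tau>)" and "\<sigma> permutes {0..<n}" and "\<tau> permutes {0..<n}"
        using pair by auto
      then have "card (?fibre \<sigma>) = card (?fibre id)" and "card (?fibre \<tau>) = card (?fibre id)"
        by (simp_all only: card_favourite_fibre)
      moreover have "{z \<in> latin_rankings n \<times> latin_rankings n. ?favourites z = p} = ?fibre \<sigma> \<times> ?fibre \<tau>"
        using p by auto
      ultimately show ?thesis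
        by (simp add: card_cartesian_product power2_eq_square)
    qed
  qed (simp_all add: finite_latin_rankings finite_permutations)
  moreover have "{z \<in> latin_rankings n \<times> latin_rankings n. case_prod Q (?favourites z)}
                   = {(PM, PW). PM \<in> latin_rankings n \<and> PW \<in> latin_rankings n \<and>
                                Q (favourite n PM) (favourite n PW)}"
    by auto
  moreover have "{p \<in> ?perms \<times> ?perms. case_prod Q p}
                   = {(\<sigma>, \<tau>). \<sigma> permutes {0..<n} \<and> \<tau> permutes {0..<n} \<and> Q \<sigma> \<tau>}"
    by auto
  ultimately show ?thesis
    by simp
qed

lemma card_latin_profiles_with_soulmates:
  "card {(PM, PW). PM \<in> rankings n \<and> PW \<in> rankings n \<and>
                   prefs_latin n PM \<and> prefs_latin n PW \<and> card (soulmates n PM PW) = k}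
     = card {P \<in> latin_rankings n. favourite n P = id} ^ 2 *
       (fact n * card {\<rho>. \<rho> permutes {0..<n} \<and> card {x \<in> {0..<n}. \<rho> x = x} = k})"
proof -
  have "{(PM, PW). PM \<in> rankings n \<and> PW \<in> rankings n \<and>
                   prefs_latin n PM \<and> prefs_latin n PW \<and> card (soulmates n PM PW) = k}
          = {(PM, PW). PM \<in> latin_rankings n \<and> PW \<in> latin_rankings n \<and>
                   card {x \<in> {0..<n}. (favourite n PW \<circ> favourite n PM) x = x} = k}"
    using card_soulmates by (auto simp: latin_rankings_def)
  then show ?thesis
    using card_latin_profiles_by_favourites[where Q = "\<lambda>\<sigma> \<tau>. card {x \<in> {0..<n}. (\<tau> \<circ> \<sigma>) x = x} = k"]
      card_permutes_pairs_compose[of "{0..<n}" "\<lambda>\<rho>. card {x \<in> {0..<n}. \<rho> x = x} = k"]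
    by simp
qed

theorem mainTheorem5:
  fixes n k :: nat
  assumes "n \<ge> 1" and "k \<le> n"
  shows "real (card {(PM, PW). PM \<in> rankings n \<and> PW \<in> rankings n \<and>
                       prefs_latin n PM \<and> prefs_latin n PW \<and>
                       card (soulmates n PM PW) = k})
         = real (num_latin_squares n) ^ 2 / fact n * real (n choose k) *
           (\<Sum>i = 0..n - k. (-1) ^ i * fact (n - k) / fact i)"
  unfolding card_latin_profiles_with_soulmates num_latin_squares_eq_fact_mult
  using card_permutes_with_fixpoints[of "{0..<n}" k] assms(2)
  by (simp add: subfactorial_def power2_eq_square)

end
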